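(* Let $f,g:\mathbb R^N\to\mathbb R\cup\{+\infty\}$ be proper lsc convex with $\mathrm{ri}(\mathrm{dom}f)\cap\mathrm{ri}(\mathrm{dom}g)\neq\emptyset$ and $\mathrm{Argmin}(f+g)\neq\emptyset$. Let $\gamma>0$, $\tau_k\in]0,2[$ with $\sum_k\tau_k(2-\tau_k)=+\infty$, and consider the Douglas–Rachford iteration $v_{k+1}=\mathrm{prox}_{\gamma f}(2x_k-z_k)$, $z_{k+1}=z_k+\tau_k(v_{k+1}-x_k)$, $x_{k+1}=\mathrm{prox}_{\gamma g}(z_{k+1})$ (with $x_0=\mathrm{prox}_{\gamma g}(z_0)$). Then $z_k\to z^\star$, where $x^\star=\mathrm{prox}_{\gamma g}(z^\star)\in\mathrm{Argmin}(f+g)$, and $x_k\to x^\star$, $v_k\to x^\star$. Let $u^\star=(z^\star-x^\star)/\gamma$. (i) If $g$ is mirror-stratifiable with respect to $(\mathcal S^g,\mathcal S^{g^*})$, then for $k$ large enough $M^g_{x^\star}\le M^g_{x_k}\le J_{g^*}(M^{g^*}_{u^\star})$. (ii) If $f$ is mirror-stratifiable with respect to $(\mathcal S^f,\mathcal S^{f^*})$, then for $k$ large enough $M^f_{x^\star}\le M^f_{v_k}\le J_{f^*}(M^{f^*}_{-u^\star})$.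
   Context: $\mathrm{prox}_{\gamma h}(x)=\mathrm{argmin}_z\frac12\|z-x\|^2+\gamma h(z)$; $\mathrm{ri}$ = relative interior. A stratification of a set $D$ is a finite partition $\mathcal S$ of $D$ into nonempty sets called strata such that for any strata $M,M'$, $M\cap\mathrm{cl}(M')\neq\emptyset$ implies $M\subset\mathrm{cl}(M')$; ordered by $M\le M'$ iff $M\subset\mathrm{cl}(M')$. $M^h_x$ denotes the stratum of $\mathcal S^h$ containing $x$ (similarly for dual strata). For proper lsc convex $R$ with conjugate $R^*$, $J_R(S)=\bigcup_{x\in S}\mathrm{ri}(\partial R(x))$, $J_{R^*}$ analogously. $R$ is mirror-stratifiable with respect to a stratification $\mathcal S$ of $\mathrm{dom}(\partial R)$ and a stratification $\mathcal S^*$ of $\mathrm{dom}(\partial R^* )$ if (i) $J_R$ maps $\mathcal S$ bijectively onto $\mathcal S^*$ with inverse $J_{R^*}$, i.e. for all $M\in\mathcal S$, $M^*\in\mathcal S^*$: $M^*=J_R(M)\iff J_{R^*}(M^* )=M$; and (ii) for all $M,M'\in\mathcal S$: $M\le M'\iff J_R(M)\ge J_R(M')$. *)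

theory Defs
  imports "HOL-Analysis.Analysis"
begin

definition edom :: "('a \<Rightarrow> ereal) \<Rightarrow> 'a set" where
  "edom f = {x. f x < \<infinity>}"

definition proper_fun :: "('a \<Rightarrow> ereal) \<Rightarrow> bool" where
  "proper_fun f \<longleftrightarrow> (\<forall>x. f x \<noteq> -\<infinity>) \<and> (\<exists>x. f x < \<infinity>)"

definition lsc_fun :: "('a::topological_space \<Rightarrow> ereal) \<Rightarrow> bool" where
  "lsc_fun f \<longleftrightarrow> (\<forall>c::ereal. closed {x. f x \<le> c})"

definition convex_fun :: "('a::real_vector \<Rightarrow> ereal) \<Rightarrow> bool" where
  "convex_fun f \<longleftrightarrow> (\<forall>x y (t::real). 0 \<le> t \<and> t \<le> 1 \<longrightarrow>
      f ((1 - t) *\<^sub>R x + t *\<^sub>R y) \<le> ereal (1 - t) * f x + ereal t * f y)"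

definition proper_lsc_convex :: "('a::real_normed_vector \<Rightarrow> ereal) \<Rightarrow> bool" where
  "proper_lsc_convex f \<longleftrightarrow> proper_fun f \<and> lsc_fun f \<and> convex_fun f"

definition Argmin :: "('a \<Rightarrow> ereal) \<Rightarrow> 'a set" where
  "Argmin h = {x. \<forall>y. h x \<le> h y}"

text \<open>Proximal operator prox_{\<gamma> h}(x) = argmin_z 1/2 |z - x|^2 + \<gamma> h(z)
  (unique minimiser for proper lsc convex h and \<gamma> > 0).\<close>
definition prox :: "real \<Rightarrow> ('a::real_normed_vector \<Rightarrow> ereal) \<Rightarrow> 'a \<Rightarrow> 'a" where
  "prox \<gamma> h x = (THE z. \<forall>w. ereal ((1/2) * (norm (z - x))\<^sup>2) + ereal \<gamma> * h z
                         \<le> ereal ((1/2) * (norm (w - x))\<^sup>2) + ereal \<gamma> * h w)"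

definition conjugate :: "('a::real_inner \<Rightarrow> ereal) \<Rightarrow> 'a \<Rightarrow> ereal" where
  "conjugate R u = (SUP x. ereal (u \<bullet> x) - R x)"

definition subdiff :: "('a::real_inner \<Rightarrow> ereal) \<Rightarrow> 'a \<Rightarrow> 'a set" where
  "subdiff R x = {u. R x < \<infinity> \<and> (\<forall>y. R x + ereal (u \<bullet> (y - x)) \<le> R y)}"

definition dom_subdiff :: "('a::real_inner \<Rightarrow> ereal) \<Rightarrow> 'a set" where
  "dom_subdiff R = {x. subdiff R x \<noteq> {}}"

definition Jmap :: "('a::euclidean_space \<Rightarrow> ereal) \<Rightarrow> 'a set \<Rightarrow> 'a set" where
  "Jmap R S = (\<Union>x\<in>S. rel_interior (subdiff R x))"

definition stratification :: "'a::topological_space set set \<Rightarrow> 'a set \<Rightarrow> bool" where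
  "stratification \<S> D \<longleftrightarrow> finite \<S> \<and> {} \<notin> \<S> \<and> \<Union>\<S> = D
     \<and> (\<forall>M\<in>\<S>. \<forall>M'\<in>\<S>. M \<noteq> M' \<longrightarrow> M \<inter> M' = {})
     \<and> (\<forall>M\<in>\<S>. \<forall>M'\<in>\<S>. M \<inter> closure M' \<noteq> {} \<longrightarrow> M \<subseteq> closure M')"

definition strat_le :: "'a::topological_space set \<Rightarrow> 'a set \<Rightarrow> bool" where
  "strat_le M M' \<longleftrightarrow> M \<subseteq> closure M'"

definition stratum :: "'a set set \<Rightarrow> 'a \<Rightarrow> 'a set" where
  "stratum \<S> x = (THE M. M \<in> \<S> \<and> x \<in> M)"

definition mirror_stratifiable ::
  "('a::euclidean_space \<Rightarrow> ereal) \<Rightarrow> 'a set set \<Rightarrow> 'a set set \<Rightarrow> bool" where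
  "mirror_stratifiable R \<S> \<S>s \<longleftrightarrow>
     stratification \<S> (dom_subdiff R) \<and> stratification \<S>s (dom_subdiff (conjugate R))
     \<and> (\<forall>M\<in>\<S>. Jmap R M \<in> \<S>s) \<and> (\<forall>Ms\<in>\<S>s. Jmap (conjugate R) Ms \<in> \<S>)
     \<and> (\<forall>M\<in>\<S>. \<forall>Ms\<in>\<S>s. Ms = Jmap R M \<longleftrightarrow> Jmap (conjugate R) Ms = M)
     \<and> (\<forall>M\<in>\<S>. \<forall>M'\<in>\<S>. strat_le M M' \<longleftrightarrow> strat_le (Jmap R M') (Jmap R M))"

end

theory Submission
  imports Defs
begin

text \<open>Write \<open>N = R\<^sub>\<gamma>\<^sub>f \<circ> R\<^sub>\<gamma>\<^sub>g\<close> with \<open>R\<^sub>\<gamma>\<^sub>h = 2 prox\<^sub>\<gamma>\<^sub>h - id\<close>. The prox of a proper lsc convex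
  function is firmly nonexpansive, so \<open>N\<close> is nonexpansive, and the Douglas--Rachford
  iteration is the Krasnosel'skii--Mann iteration \<open>z\<^sub>k\<^sub>+\<^sub>1 = z\<^sub>k + (\<tau>\<^sub>k/2)(N z\<^sub>k - z\<^sub>k)\<close>.
  The qualification condition gives Fermat's rule \<open>0 \<in> \<partial>f(x) + \<partial>g(x)\<close> at a minimiser, hence a
  fixed point of \<open>N\<close>; Fejer monotonicity and \<open>\<Sum> \<tau>\<^sub>k(2 - \<tau>\<^sub>k) = \<infinity>\<close> then give
  \<open>z\<^sub>k \<rightarrow> z\<^sup>\<star>\<close>, and \<open>x\<^sub>k, v\<^sub>k \<rightarrow> x\<^sup>\<star>\<close> by continuity of the prox.

  For identification, \<open>u\<^sub>k = (z\<^sub>k - x\<^sub>k)/\<gamma> \<in> \<partial>g(x\<^sub>k)\<close> converges to \<open>u\<^sup>\<star>\<close>. By finiteness of the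
  stratification and the frontier condition, \<open>x\<^sub>k\<close> eventually lies in a stratum above
  \<open>M\<^sub>x\<^sub>\<star>\<close> and \<open>u\<^sub>k\<close> in a dual stratum above \<open>M\<^sub>u\<^sub>\<star>\<close>. Since
  \<open>x\<^sub>k \<in> \<partial>g\<^sup>*(u\<^sub>k) \<subseteq> cl ri \<partial>g\<^sup>*(u\<^sub>k) \<subseteq> cl J\<^sub>g\<^sub>*(M\<^sub>u\<^sub>k)\<close>, the frontier condition and the
  order reversal of \<open>J\<close> give \<open>M\<^sub>x\<^sub>k \<le> J\<^sub>g\<^sub>*(M\<^sub>u\<^sub>k) \<le> J\<^sub>g\<^sub>*(M\<^sub>u\<^sub>\<star>)\<close>. The same argument applies to
  \<open>f\<close>, \<open>v\<^sub>k\<^sub>+\<^sub>1 = prox\<^sub>\<gamma>\<^sub>f(2x\<^sub>k - z\<^sub>k)\<close> and \<open>-u\<^sup>\<star>\<close>.\<close>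

section \<open>Extended-real-valued convex functions\<close>

text \<open>The real value of \<open>h x\<close>; only meaningful on \<open>edom h\<close>.\<close>
abbreviation rval :: "('a \<Rightarrow> ereal) \<Rightarrow> 'a \<Rightarrow> real" where
  "rval h x \<equiv> real_of_ereal (h x)"

lemma proper_fun_rval: "proper_fun h \<Longrightarrow> x \<in> edom h \<Longrightarrow> h x = ereal (rval h x)"
  unfolding proper_fun_def edom_def by (cases "h x") auto

lemma notin_edom_eq_infinity: "x \<notin> edom h \<Longrightarrow> h x = \<infinity>"
  unfolding edom_def by auto

lemma proper_fun_le_ereal_iff:
  "proper_fun h \<Longrightarrow> x \<in> edom h \<Longrightarrow> h x \<le> ereal c \<longleftrightarrow> rval h x \<le> c"
  by (cases "h x") (auto simp: proper_fun_def edom_def)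

lemma proper_fun_add_rval:
  assumes "proper_fun f" "proper_fun g" "x \<in> edom f" "x \<in> edom g"
  shows "f x + g x = ereal (rval f x + rval g x)"
  using assms by (cases "f x"; cases "g x") (auto simp: proper_fun_def edom_def)

lemma subdiff_iff_rval:
  fixes h :: "'a::real_inner \<Rightarrow> ereal"
  assumes "proper_fun h"
  shows "u \<in> subdiff h x \<longleftrightarrow> x \<in> edom h \<and> (\<forall>y\<in>edom h. rval h x + u \<bullet> (y - x) \<le> rval h y)"
proof -
  have "h x + ereal (u \<bullet> (y - x)) \<le> h y \<longleftrightarrow> rval h x + u \<bullet> (y - x) \<le> rval h y"
    if "x \<in> edom h" "y \<in> edom h" for y
    using proper_fun_rval[OF assms that(1)] proper_fun_rval[OF assms that(2)]
    by (metis ereal_less_eq(3) plus_ereal.simps(1))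
  moreover have "h x + ereal (u \<bullet> (y - x)) \<le> h y" if "y \<notin> edom h" for y
    using that by (simp add: notin_edom_eq_infinity)
  ultimately show ?thesis
    unfolding subdiff_def mem_Collect_eq edom_def[symmetric] by (metis edom_def mem_Collect_eq)
qed

lemma convex_on_rval:
  fixes h :: "'a::real_vector \<Rightarrow> ereal"
  assumes p: "proper_fun h" and c: "convex_fun h"
  shows "convex_on (edom h) (rval h)"
proof -
  have le: "h ((1 - t) *\<^sub>R x + t *\<^sub>R y) \<le> ereal ((1 - t) * rval h x + t * rval h y)"
    if "x \<in> edom h" "y \<in> edom h" "0 \<le> t" "t \<le> 1" for x y t
  proof -
    have "h ((1 - t) *\<^sub>R x + t *\<^sub>R y) \<le> ereal (1 - t) * h x + ereal t * h y"
      using c that unfolding convex_fun_def by blast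
    also have "\<dots> = ereal ((1 - t) * rval h x + t * rval h y)"
      using proper_fun_rval[OF p that(1)] proper_fun_rval[OF p that(2)]
      by (metis times_ereal.simps(1) plus_ereal.simps(1))
    finally show ?thesis .
  qed
  have dom: "(1 - t) *\<^sub>R x + t *\<^sub>R y \<in> edom h"
    if "x \<in> edom h" "y \<in> edom h" "0 \<le> t" "t \<le> 1" for x y t
    unfolding edom_def using le_less_trans[OF le[OF that], of \<infinity>] by simp
  show ?thesis
  proof
    show "convex (edom h)" unfolding convex_alt using dom by blast
    fix t :: real and x y assume "0 < t" "t < 1" "x \<in> edom h" "y \<in> edom h"
    then show "rval h ((1 - t) *\<^sub>R x + t *\<^sub>R y) \<le> (1 - t) * rval h x + t * rval h y"
      using le dom proper_fun_le_ereal_iff[OF p] by simp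
  qed
qed

lemma norm_add_sq: "(norm (a + b))\<^sup>2 = (norm a)\<^sup>2 + (norm b)\<^sup>2 + 2 * (a \<bullet> (b::'a::real_inner))"
  by (simp add: power2_norm_eq_inner inner_add_left inner_add_right inner_commute)

lemma norm_diff_sq: "(norm (a - b))\<^sup>2 = (norm a)\<^sup>2 + (norm b)\<^sup>2 - 2 * (a \<bullet> (b::'a::real_inner))"
  by (simp add: power2_norm_eq_inner inner_diff inner_commute algebra_simps)

section \<open>Subgradients and Fermat's rule\<close>

lemma rel_interior_extend:
  fixes A :: "'a::euclidean_space set"
  assumes c: "c \<in> rel_interior A" and d: "d \<in> A"
  shows "\<exists>t>0. c - t *\<^sub>R (d - c) \<in> A"
proof -
  obtain e where e: "e > 0" "cball c e \<inter> affine hull A \<subseteq> A"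
    using c mem_rel_interior_cball by blast
  define t where "t = e / (norm (d - c) + 1)"
  have pos: "norm (d - c) + 1 > 0" by (simp add: add_nonneg_pos)
  then have t: "t > 0" using e by (simp add: t_def)
  have "c - t *\<^sub>R (d - c) = (1 + t) *\<^sub>R c + (- t) *\<^sub>R d" by (simp add: algebra_simps)
  also have "\<dots> \<in> affine hull A"
    using c rel_interior_subset d
    by (intro mem_affine[OF affine_affine_hull hull_inc hull_inc]) auto
  finally have aff: "c - t *\<^sub>R (d - c) \<in> affine hull A" .
  have "t * norm (d - c) \<le> t * (norm (d - c) + 1)" using t by simp
  also have "\<dots> = e" using pos by (simp add: t_def)
  finally have "c - t *\<^sub>R (d - c) \<in> cball c e" using t by (simp add: dist_norm)
  then show ?thesis using aff e t by blast
qed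

lemma rel_interior_nonneg_functional_eq_0:
  fixes A :: "'a::euclidean_space set"
  assumes c: "c \<in> rel_interior A" and nonneg: "\<And>d. d \<in> A \<Longrightarrow> 0 \<le> a \<bullet> (d - c)" and d: "d \<in> A"
  shows "a \<bullet> (d - c) = 0"
proof -
  obtain t where t: "t > 0" "c - t *\<^sub>R (d - c) \<in> A" using rel_interior_extend[OF c d] by blast
  have "0 \<le> - t * (a \<bullet> (d - c))" using nonneg[OF t(2)] by (simp add: inner_diff_right)
  then show ?thesis using nonneg[OF d] t(1) by (simp add: mult_le_0_iff)
qed

text \<open>The hypothesis \<open>flat\<close> expresses that \<open>d0\<close> lies in the relative interior of the
  projection of \<open>S\<close>; it is what rules out a vertical supporting hyperplane.\<close>
lemma nonvertical_supporting_hyperplane: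
  fixes S :: "('a::euclidean_space \<times> real) set"
  assumes cs: "convex S" and mem: "(d0, m) \<in> S"
    and minim: "\<And>r. (d0, r) \<in> S \<Longrightarrow> m \<le> r"
    and up: "\<And>d r r'. (d, r) \<in> S \<Longrightarrow> r \<le> r' \<Longrightarrow> (d, r') \<in> S"
    and flat: "\<And>a d r. (\<forall>(d, r)\<in>S. 0 \<le> a \<bullet> (d - d0)) \<Longrightarrow> (d, r) \<in> S \<Longrightarrow> a \<bullet> (d - d0) = 0"
  shows "\<exists>u. \<forall>(d, r)\<in>S. m + u \<bullet> (d - d0) \<le> r"
proof -
  have notri: "(d0, m) \<notin> rel_interior S"
  proof
    assume "(d0, m) \<in> rel_interior S"
    then obtain e where e: "e > 0" "cball (d0, m) e \<inter> affine hull S \<subseteq> S"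
      using mem_rel_interior_cball by blast
    have "(d0, m - e/2) = 2 *\<^sub>R (d0, m) + (-1) *\<^sub>R (d0, m + e/2)"
      by (simp add: algebra_simps scaleR_2)
    also have "\<dots> \<in> affine hull S"
      using mem up[OF mem, of "m + e/2"] e(1)
      by (intro mem_affine[OF affine_affine_hull hull_inc hull_inc]) auto
    finally have "(d0, m - e/2) \<in> affine hull S" .
    moreover have "(d0, m - e/2) \<in> cball (d0, m) e"
      using e by (simp add: dist_Pair_Pair)
    ultimately have "(d0, m - e/2) \<in> S" using e by blast
    then show False using minim[of "m - e/2"] e(1) by simp
  qed
  obtain a where "a \<noteq> 0" and a1: "\<And>y. y \<in> S \<Longrightarrow> a \<bullet> (d0, m) \<le> a \<bullet> y"
    and a2: "\<And>y. y \<in> rel_interior S \<Longrightarrow> a \<bullet> (d0, m) < a \<bullet> y"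
    using supporting_hyperplane_rel_boundary[OF cs mem notri] by metis
  obtain a' b where ab: "a = (a', b)" by (cases a)
  have ineq: "a' \<bullet> d0 + b * m \<le> a' \<bullet> d + b * r" if "(d, r) \<in> S" for d r
    using a1[OF that] ab by simp
  have "b \<noteq> 0"
  proof
    assume b: "b = 0"
    obtain d r where dr: "(d, r) \<in> rel_interior S"
      using rel_interior_eq_empty[OF cs] mem by fastforce
    have "\<forall>(d, r)\<in>S. 0 \<le> a' \<bullet> (d - d0)"
      using ineq b by (auto simp: inner_diff_right)
    then have "a' \<bullet> (d - d0) = 0" using flat dr rel_interior_subset by blast
    then show False using a2[OF dr] ab b by (simp add: inner_diff_right)
  qed
  moreover have "b \<ge> 0"
    using ineq[OF up[OF mem, of "m + 1"]] by (simp add: algebra_simps)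
  ultimately have bp: "b > 0" by simp
  have "m + (- (1/b) *\<^sub>R a') \<bullet> (d - d0) \<le> r" if "(d, r) \<in> S" for d r
  proof -
    have "b * (m + (- (1/b) *\<^sub>R a') \<bullet> (d - d0)) = b * m - a' \<bullet> (d - d0)"
      using bp by (simp add: algebra_simps)
    also have "\<dots> \<le> b * r" using ineq[OF that] by (simp add: inner_diff_right algebra_simps)
    finally show ?thesis using bp by simp
  qed
  then show ?thesis by blast
qed

lemma subdiff_nonempty_rel_interior:
  fixes h :: "'a::euclidean_space \<Rightarrow> ereal"
  assumes p: "proper_fun h" and cv: "convex_fun h" and c: "c \<in> rel_interior (edom h)"
  shows "\<exists>u. u \<in> subdiff h c"
proof -
  define S where "S = epigraph (edom h) (rval h)"
  have cE: "c \<in> edom h" using c rel_interior_subset by blast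
  have "\<exists>u. \<forall>(d, r)\<in>S. rval h c + u \<bullet> (d - c) \<le> r"
  proof (rule nonvertical_supporting_hyperplane)
    show "convex S" unfolding S_def by (rule convex_epigraphI[OF convex_on_rval[OF p cv]])
    fix a d r assume nonneg: "\<forall>(d, r)\<in>S. 0 \<le> a \<bullet> (d - c)" and "(d, r) \<in> S"
    then show "a \<bullet> (d - c) = 0"
      by (intro rel_interior_nonneg_functional_eq_0[OF c]) (auto simp: S_def mem_epigraph)
  qed (use cE in \<open>auto simp: S_def mem_epigraph\<close>)
  then obtain u where "\<forall>(d, r)\<in>S. rval h c + u \<bullet> (d - c) \<le> r" by blast
  then have "u \<in> subdiff h c"
    using cE unfolding subdiff_iff_rval[OF p] by (auto simp: S_def mem_epigraph)
  then show ?thesis by blast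
qed

lemma edom_Argmin_add:
  assumes pf: "proper_fun f" and pg: "proper_fun g" and c: "c \<in> edom f" "c \<in> edom g"
    and xs: "xs \<in> Argmin (\<lambda>y. f y + g y)"
  shows "xs \<in> edom f" and "xs \<in> edom g"
proof -
  have "f xs + g xs \<le> f c + g c" using xs by (simp add: Argmin_def)
  also have "\<dots> < \<infinity>" using proper_fun_add_rval[OF pf pg c] by simp
  finally have "f xs + g xs < \<infinity>" .
  then show "xs \<in> edom f" "xs \<in> edom g"
    using pf pg unfolding proper_fun_def edom_def by (cases "f xs"; cases "g xs"; simp)+
qed

text \<open>Above \<open>d = 0\<close> its lowest point is at height
  \<open>min (f + g)\<close>, and the slope of a non-vertical supporting hyperplane there is a common
  subgradient \<open>u \<in> \<partial>g(x), -u \<in> \<partial>f(x)\<close>.\<close>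
definition diff_epigraph :: "('a::real_vector \<Rightarrow> ereal) \<Rightarrow> ('a \<Rightarrow> ereal) \<Rightarrow> ('a \<times> real) set" where
  "diff_epigraph f g = (\<lambda>((y, r), (w, s)). (w - y, r + s)) `
    (epigraph (edom f) (rval f) \<times> epigraph (edom g) (rval g))"

lemma mem_diff_epigraph:
  "(d, r) \<in> diff_epigraph f g \<longleftrightarrow>
    (\<exists>w y. d = w - y \<and> y \<in> edom f \<and> w \<in> edom g \<and> rval f y + rval g w \<le> r)"
proof
  assume "(d, r) \<in> diff_epigraph f g"
  then show "\<exists>w y. d = w - y \<and> y \<in> edom f \<and> w \<in> edom g \<and> rval f y + rval g w \<le> r"
    unfolding diff_epigraph_def by (force simp: mem_epigraph)
next
  assume "\<exists>w y. d = w - y \<and> y \<in> edom f \<and> w \<in> edom g \<and> rval f y + rval g w \<le> r"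
  then obtain w y where "d = w - y" "y \<in> edom f" "w \<in> edom g" "rval f y + rval g w \<le> r" by blast
  then show "(d, r) \<in> diff_epigraph f g" unfolding diff_epigraph_def
    by (intro image_eqI[of _ _ "((y, rval f y), (w, r - rval f y))"]) (auto simp: mem_epigraph)
qed

lemma convex_diff_epigraph:
  "proper_fun f \<Longrightarrow> convex_fun f \<Longrightarrow> proper_fun g \<Longrightarrow> convex_fun g \<Longrightarrow>
    convex (diff_epigraph f g)"
  unfolding diff_epigraph_def
  by (intro convex_linear_image convex_Times convex_epigraphI convex_on_rval)
    (auto simp: linear_iff algebra_simps)

lemma Argmin_add_subdiff:
  fixes f g :: "'a::euclidean_space \<Rightarrow> ereal"
  assumes pf: "proper_fun f" and cf: "convex_fun f" and pg: "proper_fun g" and cg: "convex_fun g"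
    and cf': "c \<in> rel_interior (edom f)" and cg': "c \<in> rel_interior (edom g)"
    and xs: "xs \<in> Argmin (\<lambda>y. f y + g y)"
  shows "\<exists>u. u \<in> subdiff g xs \<and> - u \<in> subdiff f xs"
proof -
  have cE: "c \<in> edom f" "c \<in> edom g" using cf' cg' rel_interior_subset by blast+
  note xE = edom_Argmin_add[OF pf pg cE xs]
  define S where "S = diff_epigraph f g"
  have graphS: "(w - y, rval f y + rval g w) \<in> S" if "y \<in> edom f" "w \<in> edom g" for w y
    unfolding S_def mem_diff_epigraph using that by blast
  define m where "m = rval f xs + rval g xs"
  have "\<exists>u. \<forall>(d, r)\<in>S. m + u \<bullet> (d - 0) \<le> r"
  proof (rule nonvertical_supporting_hyperplane)
    show "convex S" unfolding S_def by (rule convex_diff_epigraph[OF pf cf pg cg])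
    show "(0, m) \<in> S" using graphS[OF xE] by (simp add: m_def)
    show "m \<le> r" if r: "(0, r) \<in> S" for r
    proof -
      obtain y where y: "y \<in> edom f" "y \<in> edom g" "rval f y + rval g y \<le> r"
        using r unfolding S_def mem_diff_epigraph by auto
      have "f xs + g xs \<le> f y + g y" using xs by (simp add: Argmin_def)
      then show ?thesis
        using y proper_fun_add_rval[OF pf pg xE] proper_fun_add_rval[OF pf pg y(1,2)]
        by (simp add: m_def)
    qed
    show "(d, r') \<in> S" if "(d, r) \<in> S" "r \<le> r'" for d r r'
      using that unfolding S_def mem_diff_epigraph by force
    fix a d r assume nonneg: "\<forall>(d, r)\<in>S. 0 \<le> a \<bullet> (d - 0)" and "(d, r) \<in> S"
    then obtain w y where wy: "d = w - y" "y \<in> edom f" "w \<in> edom g"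
      unfolding S_def mem_diff_epigraph by blast
    have "0 \<le> a \<bullet> (w - y)" if "y \<in> edom f" "w \<in> edom g" for w y
      using nonneg graphS[OF that] by fastforce
    then have "a \<bullet> (w - c) = 0" and "(- a) \<bullet> (y - c) = 0"
      using wy(2,3) cE
      by (intro rel_interior_nonneg_functional_eq_0[OF cg'] rel_interior_nonneg_functional_eq_0[OF cf'];
          force simp: inner_diff_right)+
    then show "a \<bullet> (d - 0) = 0" using wy by (simp add: inner_diff_right)
  qed
  then obtain u where uS: "\<forall>(d, r)\<in>S. m + u \<bullet> (d - 0) \<le> r" by blast
  have u: "m + u \<bullet> (w - y) \<le> rval f y + rval g w" if "y \<in> edom f" "w \<in> edom g" for w y
    using uS graphS[OF that] by fastforce
  have "u \<in> subdiff g xs" unfolding subdiff_iff_rval[OF pg]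
    using xE u[OF xE(1)] by (simp add: m_def)
  moreover have "- u \<in> subdiff f xs" unfolding subdiff_iff_rval[OF pf]
    using xE u[OF _ xE(2)] by (simp add: m_def inner_diff_right)
  ultimately show ?thesis by blast
qed

lemma Argmin_add_of_subdiff:
  assumes pf: "proper_fun f" and pg: "proper_fun g"
    and ug: "u \<in> subdiff g x" and uf: "- u \<in> subdiff f x"
  shows "x \<in> Argmin (\<lambda>y. f y + g y)"
  unfolding Argmin_def
proof (intro CollectI allI)
  fix y
  have xE: "x \<in> edom f" "x \<in> edom g"
    using uf ug subdiff_iff_rval[OF pf] subdiff_iff_rval[OF pg] by auto
  show "f x + g x \<le> f y + g y"
  proof (cases "y \<in> edom f \<and> y \<in> edom g")
    case True
    have "rval f x + (- u) \<bullet> (y - x) \<le> rval f y" and "rval g x + u \<bullet> (y - x) \<le> rval g y"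
      using uf ug True unfolding subdiff_iff_rval[OF pf] subdiff_iff_rval[OF pg] by auto
    then have "rval f x + rval g x \<le> rval f y + rval g y" by simp
    then show ?thesis
      using True by (simp add: proper_fun_add_rval[OF pf pg xE] proper_fun_add_rval[OF pf pg, of y])
  next
    case False
    have "f y \<noteq> - \<infinity>" "g y \<noteq> - \<infinity>" using pf pg by (auto simp: proper_fun_def)
    then have "f y + g y = \<infinity>" using False unfolding edom_def by (cases "f y"; cases "g y") auto
    then show ?thesis by (metis ereal_less_eq(1))
  qed
qed

section \<open>The proximal map\<close>

definition prox_objective :: "real \<Rightarrow> ('a::real_normed_vector \<Rightarrow> ereal) \<Rightarrow> 'a \<Rightarrow> 'a \<Rightarrow> ereal" where
  "prox_objective \<gamma> h x z = ereal ((1/2) * (norm (z - x))\<^sup>2) + ereal \<gamma> * h z"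

lemma prox_eq_The_argmin:
  "prox \<gamma> h x = (THE z. \<forall>w. prox_objective \<gamma> h x z \<le> prox_objective \<gamma> h x w)"
  by (simp add: prox_def prox_objective_def)

lemma prox_objective_edom:
  "proper_fun h \<Longrightarrow> z \<in> edom h \<Longrightarrow>
    prox_objective \<gamma> h x z = ereal ((1/2) * (norm (z - x))\<^sup>2 + \<gamma> * rval h z)"
  unfolding prox_objective_def by (subst proper_fun_rval[of h z]) auto

lemma prox_objective_notin_edom:
  "z \<notin> edom h \<Longrightarrow> \<gamma> > 0 \<Longrightarrow> prox_objective \<gamma> h x z = \<infinity>"
  by (simp add: prox_objective_def notin_edom_eq_infinity)

text \<open>Completing the square: a subgradient inequality at \<open>q\<close> with slope \<open>(x - q)/\<gamma>\<close>
  bounds the objective at \<open>w\<close> below by its value at \<open>q\<close> plus \<open>|w - q|\<^sup>2/2\<close>.\<close>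
lemma prox_eqI:
  fixes h :: "'a::real_inner \<Rightarrow> ereal"
  assumes p: "proper_fun h" and g: "\<gamma> > 0" and u: "(1/\<gamma>) *\<^sub>R (x - q) \<in> subdiff h q"
  shows "prox \<gamma> h x = q"
proof -
  have q: "q \<in> edom h"
    and sg: "\<And>w. w \<in> edom h \<Longrightarrow> rval h q + ((1/\<gamma>) *\<^sub>R (x - q)) \<bullet> (w - q) \<le> rval h w"
    using u subdiff_iff_rval[OF p] by auto
  have key: "(1/2) * (norm (q - x))\<^sup>2 + \<gamma> * rval h q + (1/2) * (norm (w - q))\<^sup>2
     \<le> (1/2) * (norm (w - x))\<^sup>2 + \<gamma> * rval h w" if w: "w \<in> edom h" for w
  proof -
    have "\<gamma> * (rval h q + ((1/\<gamma>) *\<^sub>R (x - q)) \<bullet> (w - q)) \<le> \<gamma> * rval h w"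
      using sg[OF w] g by simp
    then have "\<gamma> * rval h q + (x - q) \<bullet> (w - q) \<le> \<gamma> * rval h w"
      using g by (simp add: algebra_simps)
    moreover have "(norm (w - x))\<^sup>2 = (norm (w - q))\<^sup>2 + (norm (x - q))\<^sup>2 - 2 * ((w - q) \<bullet> (x - q))"
      using norm_diff_sq[of "w - q" "x - q"] by (simp add: algebra_simps)
    ultimately show ?thesis by (simp add: norm_minus_commute inner_commute algebra_simps)
  qed
  let ?P = "\<lambda>z. \<forall>w. prox_objective \<gamma> h x z \<le> prox_objective \<gamma> h x w"
  have "?P q"
  proof
    fix w show "prox_objective \<gamma> h x q \<le> prox_objective \<gamma> h x w"
    proof (cases "w \<in> edom h")
      case True
      have "(1/2) * (norm (q - x))\<^sup>2 + \<gamma> * rval h q \<le> (1/2) * (norm (w - x))\<^sup>2 + \<gamma> * rval h w"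
        using key[OF True] zero_le_power2[of "norm (w - q)"] by linarith
      then show ?thesis by (simp add: prox_objective_edom[OF p q] prox_objective_edom[OF p True])
    qed (simp add: prox_objective_notin_edom g)
  qed
  moreover have "z = q" if "?P z" for z
  proof -
    have le: "prox_objective \<gamma> h x z \<le> prox_objective \<gamma> h x q" using that by blast
    then have z: "z \<in> edom h"
      using prox_objective_notin_edom[of z h \<gamma>] prox_objective_edom[OF p q] g by force
    have "(1/2) * (norm (z - x))\<^sup>2 + \<gamma> * rval h z \<le> (1/2) * (norm (q - x))\<^sup>2 + \<gamma> * rval h q"
      using le by (simp add: prox_objective_edom[OF p q] prox_objective_edom[OF p z])
    then have "(norm (z - q))\<^sup>2 \<le> 0" using key[OF z] by linarith
    then show ?thesis by simp
  qed
  ultimately show ?thesis unfolding prox_eq_The_argmin by (rule the_equality)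
qed

lemma le_of_le_add_mult:
  fixes a b c :: real
  assumes H: "\<And>t. 0 < t \<Longrightarrow> t \<le> 1 \<Longrightarrow> a \<le> b + t * c"
  shows "a \<le> b"
proof (rule ccontr)
  assume ab: "\<not> a \<le> b"
  show False
  proof (cases "c \<le> 0")
    case True
    then show False using H[of 1] ab by simp
  next
    case False
    define t where "t = min 1 ((a - b) / (2 * c))"
    have t: "0 < t" "t \<le> 1" using ab False by (auto simp: t_def)
    have "t * c \<le> ((a - b) / (2 * c)) * c" using False by (intro mult_right_mono) (auto simp: t_def)
    also have "\<dots> = (a - b) / 2" using False by simp
    finally show False using H[OF t] ab by simp
  qed
qed

text \<open>Compare \<open>q\<close> with the points \<open>q + t (y - q)\<close> and let \<open>t \<rightarrow> 0\<close>.\<close>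
lemma prox_objective_argmin_subdiff:
  fixes h :: "'a::real_inner \<Rightarrow> ereal"
  assumes p: "proper_fun h" and cv: "convex_fun h" and g: "\<gamma> > 0"
    and P: "\<And>w. prox_objective \<gamma> h x q \<le> prox_objective \<gamma> h x w"
  shows "(1/\<gamma>) *\<^sub>R (x - q) \<in> subdiff h q"
proof -
  obtain w0 where w0: "w0 \<in> edom h" using p unfolding proper_fun_def edom_def by blast
  have qE: "q \<in> edom h"
    using P[of w0] prox_objective_notin_edom[OF _ g, of q h x] prox_objective_edom[OF p w0] by force
  have psi: "(1/2) * (norm (q - x))\<^sup>2 + \<gamma> * rval h q \<le> (1/2) * (norm (w - x))\<^sup>2 + \<gamma> * rval h w"
    if "w \<in> edom h" for w
    using P[of w] by (simp add: prox_objective_edom[OF p qE] prox_objective_edom[OF p that])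
  have conv: "convex_on (edom h) (rval h)" by (rule convex_on_rval[OF p cv])
  show ?thesis unfolding subdiff_iff_rval[OF p]
  proof (intro conjI ballI qE)
    fix y assume y: "y \<in> edom h"
    define C where "C = (q - x) \<bullet> (y - q)"
    have main: "\<gamma> * rval h q \<le> C + \<gamma> * rval h y + t * ((norm (y - q))\<^sup>2 / 2)"
      if t: "0 < t" "t \<le> 1" for t
    proof -
      define yt where "yt = (1 - t) *\<^sub>R q + t *\<^sub>R y"
      have yt: "yt \<in> edom h" using convexD_alt[OF convex_on_imp_convex[OF conv] qE y] t
        by (simp add: yt_def)
      have "\<gamma> * rval h yt \<le> \<gamma> * ((1 - t) * rval h q + t * rval h y)"
        using convex_onD[OF conv, of t q y] t qE y g by (simp add: yt_def)
      moreover have "(norm (yt - x))\<^sup>2 = (norm (q - x))\<^sup>2 + t\<^sup>2 * (norm (y - q))\<^sup>2 + 2 * (t * C)"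
      proof -
        have e: "yt - x = (q - x) + t *\<^sub>R (y - q)" by (simp add: yt_def algebra_simps)
        show ?thesis unfolding e norm_add_sq C_def by (simp add: power_mult_distrib)
      qed
      ultimately have "t * (\<gamma> * rval h q) \<le> t * (C + \<gamma> * rval h y + t * ((norm (y - q))\<^sup>2 / 2))"
        using psi[OF yt] by (simp add: algebra_simps power2_eq_square)
      then show ?thesis using t by simp
    qed
    have "\<gamma> * rval h q \<le> C + \<gamma> * rval h y" by (rule le_of_le_add_mult[OF main])
    then have "\<gamma> * (rval h q + ((1/\<gamma>) *\<^sub>R (x - q)) \<bullet> (y - q)) \<le> \<gamma> * rval h y"
      using g by (simp add: C_def algebra_simps inner_diff_left)
    then show "rval h q + ((1/\<gamma>) *\<^sub>R (x - q)) \<bullet> (y - q) \<le> rval h y" using g by simp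
  qed
qed

lemma subdiff_exists:
  fixes h :: "'a::euclidean_space \<Rightarrow> ereal"
  assumes p: "proper_fun h" and cv: "convex_fun h"
  obtains c u where "u \<in> subdiff h c"
proof -
  have "edom h \<noteq> {}" using p unfolding proper_fun_def edom_def by blast
  then have "rel_interior (edom h) \<noteq> {}"
    using rel_interior_eq_empty[OF convex_on_imp_convex[OF convex_on_rval[OF p cv]]] by simp
  then obtain c where c: "c \<in> rel_interior (edom h)" by blast
  obtain u where "u \<in> subdiff h c" using subdiff_nonempty_rel_interior[OF p cv c] by blast
  then show ?thesis by (rule that)
qed

lemma subdiff_lower_bound:
  fixes h :: "'a::real_inner \<Rightarrow> ereal"
  assumes p: "proper_fun h" and u: "u \<in> subdiff h c" and z: "z \<in> edom h"
  shows "rval h c - norm u * norm (x - c) - norm u * norm (z - x) \<le> rval h z"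
proof -
  have "- (u \<bullet> (z - c)) \<le> norm u * norm (c - z)"
    using norm_cauchy_schwarz[of u "c - z"] by (simp add: inner_diff_right)
  also have "\<dots> \<le> norm u * (norm (z - x) + norm (x - c))"
    using norm_triangle_ineq[of "c - x" "x - z"]
    by (intro mult_left_mono) (auto simp: norm_minus_commute algebra_simps)
  finally show ?thesis
    using u z unfolding subdiff_iff_rval[OF p] by (auto simp: algebra_simps)
qed

lemma quadratic_bound:
  fixes s k K M :: real
  assumes s: "0 \<le> s" and k: "0 \<le> k" and H: "(1/2) * s\<^sup>2 - k * s + K \<le> M"
  shows "s \<le> 2 * k + 2 * \<bar>M - K\<bar> + 1"
proof (rule ccontr)
  define D where "D = \<bar>M - K\<bar>"
  assume "\<not> ?thesis"
  then have big: "s > 2 * k + 2 * D + 1" by (simp add: D_def)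
  have D0: "D \<ge> 0" by (simp add: D_def)
  have s1: "s \<ge> 1" using big k D0 by linarith
  have "s * s \<ge> s * (2 * k + 2 * D + 1)" using big s by (intro mult_left_mono) auto
  moreover have "D * s \<ge> D * 1" using s1 D0 by (intro mult_left_mono) auto
  moreover have "M - K \<le> D" by (simp add: D_def)
  ultimately show False using H s1 by (simp add: power2_eq_square algebra_simps)
qed

lemma lsc_fun_tendsto_le:
  fixes h :: "'a::metric_space \<Rightarrow> ereal"
  assumes p: "proper_fun h" and l: "lsc_fun h" and dom: "\<And>n. \<zeta> n \<in> edom h"
    and lim: "\<zeta> \<longlonglongrightarrow> q" and vlim: "(\<lambda>n. rval h (\<zeta> n)) \<longlonglongrightarrow> L"
  shows "q \<in> edom h" and "rval h q \<le> L"
proof -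
  have hq: "h q \<le> ereal (L + e)" if e: "e > 0" for e
  proof -
    have "\<forall>\<^sub>F n in sequentially. rval h (\<zeta> n) < L + e"
      using order_tendstoD(2)[OF vlim, of "L + e"] e by simp
    then have ev: "\<forall>\<^sub>F n in sequentially. \<zeta> n \<in> {z. h z \<le> ereal (L + e)}"
      by eventually_elim (simp add: proper_fun_le_ereal_iff[OF p dom])
    have "closed {z. h z \<le> ereal (L + e)}" using l by (simp add: lsc_fun_def)
    from Lim_in_closed_set[OF this ev trivial_limit_sequentially lim] show ?thesis by simp
  qed
  have "h q \<le> ereal (L + 1)" by (rule hq) simp
  also have "\<dots> < \<infinity>" by simp
  finally show qE: "q \<in> edom h" by (simp add: edom_def)
  show "rval h q \<le> L"
  proof (rule field_le_epsilon)
    fix e :: real assume "0 < e"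
    from hq[OF this] show "rval h q \<le> L + e" unfolding proper_fun_le_ereal_iff[OF p qE] .
  qed
qed

text \<open>The objective is coercive by the affine minorant coming from any subgradient, so a
  minimising sequence is bounded; a limit point of it is a minimiser by lower semicontinuity.\<close>
lemma prox_objective_has_argmin:
  fixes h :: "'a::euclidean_space \<Rightarrow> ereal"
  assumes plc: "proper_lsc_convex h" and g: "\<gamma> > 0"
  obtains q where "\<And>w. prox_objective \<gamma> h x q \<le> prox_objective \<gamma> h x w"
proof -
  have p: "proper_fun h" and l: "lsc_fun h" and cv: "convex_fun h"
    using plc by (auto simp: proper_lsc_convex_def)
  obtain c u where u: "u \<in> subdiff h c" using subdiff_exists[OF p cv] .
  define psi where "psi z = (1/2) * (norm (z - x))\<^sup>2 + \<gamma> * rval h z" for z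
  define k where "k = \<gamma> * norm u"
  define K where "K = \<gamma> * (rval h c - norm u * norm (x - c))"
  have k: "k \<ge> 0" using g by (simp add: k_def)
  have lower: "(1/2) * (norm (z - x))\<^sup>2 - k * norm (z - x) + K \<le> psi z" if "z \<in> edom h" for z
    using mult_left_mono[OF subdiff_lower_bound[OF p u that, of x], of \<gamma>] g
    by (simp add: psi_def k_def K_def algebra_simps)
  have "K - k\<^sup>2 / 2 \<le> psi z" if "z \<in> edom h" for z
    using lower[OF that] zero_le_power2[of "norm (z - x) - k"]
    by (simp add: power2_eq_square algebra_simps)
  then have bdd: "bdd_below (psi ` edom h)" unfolding bdd_below_def by blast
  have ne: "psi ` edom h \<noteq> {}" using p unfolding proper_fun_def edom_def by blast
  define m where "m = Inf (psi ` edom h)"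
  have mle: "m \<le> psi w" if "w \<in> edom h" for w
    unfolding m_def using bdd that by (simp add: cInf_lower)
  obtain v where v: "\<And>n. v n \<in> psi ` edom h" "v \<longlonglongrightarrow> m"
    using closure_contains_Inf[OF ne bdd] unfolding closure_sequential m_def by blast
  then have "\<forall>n. \<exists>z. z \<in> edom h \<and> v n = psi z" by blast
  then obtain zs where zs: "\<And>n. zs n \<in> edom h" and "\<And>n. psi (zs n) = v n" by metis
  then have psilim: "(\<lambda>n. psi (zs n)) \<longlonglongrightarrow> m" using v(2) by simp
  obtain M where "\<forall>y\<in>range (\<lambda>n. psi (zs n)). norm y \<le> M"
    using convergent_imp_bounded[OF psilim] unfolding bounded_iff by blast
  then have M: "\<And>n. psi (zs n) \<le> M" by (metis abs_le_D1 real_norm_def rangeI)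
  have "norm (zs n - x) \<le> 2 * k + 2 * \<bar>M - K\<bar> + 1" for n
    by (rule quadratic_bound[OF norm_ge_zero k order_trans[OF lower[OF zs] M]])
  then have "norm (zs n) \<le> 2 * k + 2 * \<bar>M - K\<bar> + 1 + norm x" for n
    using norm_triangle_ineq[of "zs n - x" x] by (simp add: add.commute add_increasing2 order_trans)
  then have "bounded (range zs)" unfolding bounded_iff by blast
  then obtain q r where r: "strict_mono r" and lim: "(zs \<circ> r) \<longlonglongrightarrow> q"
    using bounded_imp_convergent_subsequence by blast
  have "(\<lambda>n. rval h ((zs \<circ> r) n)) \<longlonglongrightarrow> (m - (1/2) * (norm (q - x))\<^sup>2) / \<gamma>"
  proof -
    have "(\<lambda>n. (psi ((zs \<circ> r) n) - (1/2) * (norm ((zs \<circ> r) n - x))\<^sup>2) / \<gamma>)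
        \<longlonglongrightarrow> (m - (1/2) * (norm (q - x))\<^sup>2) / \<gamma>"
      using LIMSEQ_subseq_LIMSEQ[OF psilim r] lim g by (intro tendsto_intros) (auto simp: o_def)
    then show ?thesis using g by (simp add: psi_def)
  qed
  from lsc_fun_tendsto_le[OF p l _ lim this] zs
  have qE: "q \<in> edom h" and "psi q \<le> m"
    using g by (auto simp: psi_def field_simps)
  then have "psi q \<le> psi w" if "w \<in> edom h" for w using mle[OF that] by simp
  then have "prox_objective \<gamma> h x q \<le> prox_objective \<gamma> h x w" for w
    by (cases "w \<in> edom h")
      (simp_all add: prox_objective_edom[OF p] prox_objective_notin_edom[OF _ g] qE psi_def)
  then show ?thesis by (rule that)
qed

lemma prox_subdiff:
  fixes h :: "'a::euclidean_space \<Rightarrow> ereal"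
  assumes plc: "proper_lsc_convex h" and g: "\<gamma> > 0"
  shows "(1/\<gamma>) *\<^sub>R (x - prox \<gamma> h x) \<in> subdiff h (prox \<gamma> h x)"
proof -
  have p: "proper_fun h" and cv: "convex_fun h" using plc by (auto simp: proper_lsc_convex_def)
  obtain q where "\<And>w. prox_objective \<gamma> h x q \<le> prox_objective \<gamma> h x w"
    using prox_objective_has_argmin[OF plc g, of x] by blast
  then have "(1/\<gamma>) *\<^sub>R (x - q) \<in> subdiff h q" by (rule prox_objective_argmin_subdiff[OF p cv g])
  moreover from this have "prox \<gamma> h x = q" by (rule prox_eqI[OF p g])
  ultimately show ?thesis by simp
qed

definition nonexpansive :: "('a::real_normed_vector \<Rightarrow> 'a) \<Rightarrow> bool" where
  "nonexpansive N \<longleftrightarrow> (\<forall>a b. norm (N a - N b) \<le> norm (a - b))"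

lemma nonexpansive_comp:
  assumes "nonexpansive N" and "nonexpansive M"
  shows "nonexpansive (N \<circ> M)"
  unfolding nonexpansive_def comp_def
proof (intro allI)
  fix a b
  have "norm (N (M a) - N (M b)) \<le> norm (M a - M b)" using assms(1) by (simp add: nonexpansive_def)
  also have "\<dots> \<le> norm (a - b)" using assms(2) by (simp add: nonexpansive_def)
  finally show "norm (N (M a) - N (M b)) \<le> norm (a - b)" .
qed

lemma prox_firmly_nonexpansive:
  fixes h :: "'a::euclidean_space \<Rightarrow> ereal"
  assumes plc: "proper_lsc_convex h" and g: "\<gamma> > 0"
  shows "(norm (prox \<gamma> h a - prox \<gamma> h b))\<^sup>2 \<le> (prox \<gamma> h a - prox \<gamma> h b) \<bullet> (a - b)"
proof -
  have p: "proper_fun h" using plc by (simp add: proper_lsc_convex_def)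
  define pa pb where "pa = prox \<gamma> h a" and "pb = prox \<gamma> h b"
  define ua ub where "ua = (1/\<gamma>) *\<^sub>R (a - pa)" and "ub = (1/\<gamma>) *\<^sub>R (b - pb)"
  have "ua \<in> subdiff h pa" and "ub \<in> subdiff h pb"
    unfolding ua_def ub_def pa_def pb_def by (rule prox_subdiff[OF plc g])+
  then have "rval h pa + ua \<bullet> (pb - pa) \<le> rval h pb" and "rval h pb + ub \<bullet> (pa - pb) \<le> rval h pa"
    unfolding subdiff_iff_rval[OF p] by auto
  then have "0 \<le> (ua - ub) \<bullet> (pa - pb)" by (simp add: inner_diff_left inner_diff_right)
  moreover have "\<gamma> *\<^sub>R (ua - ub) = (a - b) - (pa - pb)"
    using g by (simp add: ua_def ub_def scaleR_diff_right)
  then have "\<gamma> * ((ua - ub) \<bullet> (pa - pb)) = ((a - b) - (pa - pb)) \<bullet> (pa - pb)"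
    by (metis inner_scaleR_left)
  ultimately have "0 \<le> ((a - b) - (pa - pb)) \<bullet> (pa - pb)"
    using g by (metis mult_nonneg_nonneg order_less_imp_le)
  also have "\<dots> = (pa - pb) \<bullet> (a - b) - (norm (pa - pb))\<^sup>2"
    unfolding inner_diff_left[of "a - b" "pa - pb"] power2_norm_eq_inner by (simp add: inner_commute)
  finally show ?thesis unfolding pa_def pb_def by simp
qed

lemma prox_nonexpansive:
  fixes h :: "'a::euclidean_space \<Rightarrow> ereal"
  assumes plc: "proper_lsc_convex h" and g: "\<gamma> > 0"
  shows "nonexpansive (prox \<gamma> h)"
  unfolding nonexpansive_def
proof (intro allI)
  fix a b
  define d where "d = prox \<gamma> h a - prox \<gamma> h b"
  have "(norm d)\<^sup>2 \<le> d \<bullet> (a - b)"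
    unfolding d_def by (rule prox_firmly_nonexpansive[OF plc g])
  also have "\<dots> \<le> norm d * norm (a - b)" by (rule norm_cauchy_schwarz)
  finally have "norm d * norm d \<le> norm d * norm (a - b)" by (simp add: power2_eq_square)
  then have "norm d \<le> norm (a - b)" by (cases "norm d = 0") (auto simp: mult_le_cancel_left)
  then show "norm (prox \<gamma> h a - prox \<gamma> h b) \<le> norm (a - b)" by (simp add: d_def)
qed

definition reflected_prox :: "real \<Rightarrow> ('a::real_normed_vector \<Rightarrow> ereal) \<Rightarrow> 'a \<Rightarrow> 'a" where
  "reflected_prox \<gamma> h w = 2 *\<^sub>R prox \<gamma> h w - w"

lemma reflected_prox_nonexpansive:
  fixes h :: "'a::euclidean_space \<Rightarrow> ereal"
  assumes plc: "proper_lsc_convex h" and g: "\<gamma> > 0"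
  shows "nonexpansive (reflected_prox \<gamma> h)"
  unfolding nonexpansive_def
proof (intro allI)
  fix a b
  define d e where "d = prox \<gamma> h a - prox \<gamma> h b" and "e = a - b"
  have "(norm d)\<^sup>2 \<le> d \<bullet> e"
    unfolding d_def e_def by (rule prox_firmly_nonexpansive[OF plc g])
  then have "(norm (2 *\<^sub>R d + (- e)))\<^sup>2 \<le> (norm e)\<^sup>2"
    unfolding norm_add_sq by (simp add: power_mult_distrib)
  then have "norm (2 *\<^sub>R d + (- e)) \<le> norm e" by (rule power2_le_imp_le) simp
  moreover have "reflected_prox \<gamma> h a - reflected_prox \<gamma> h b = 2 *\<^sub>R d + (- e)"
    by (simp add: reflected_prox_def d_def e_def algebra_simps)
  ultimately show "norm (reflected_prox \<gamma> h a - reflected_prox \<gamma> h b) \<le> norm (a - b)"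
    by (simp add: e_def)
qed

section \<open>Krasnosel'skii--Mann iteration\<close>

lemma nonexpansive_tendsto:
  assumes N: "nonexpansive N" and f: "(f \<longlongrightarrow> l) F"
  shows "((\<lambda>x. N (f x)) \<longlongrightarrow> N l) F"
proof -
  have "((\<lambda>x. norm (f x - l)) \<longlongrightarrow> 0) F" using f by (simp add: tendsto_norm_zero_iff LIM_zero_iff)
  then have "((\<lambda>x. N (f x) - N l) \<longlongrightarrow> 0) F"
    by (rule Lim_null_comparison[rotated]) (use N in \<open>simp add: nonexpansive_def\<close>)
  then show ?thesis by (rule LIM_zero_cancel)
qed

lemma norm_convex_combination_sq:
  fixes a b :: "'a::real_inner"
  shows "(norm ((1 - l) *\<^sub>R a + l *\<^sub>R b))\<^sup>2
    = (1 - l) * (norm a)\<^sup>2 + l * (norm b)\<^sup>2 - l * (1 - l) * (norm (a - b))\<^sup>2"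
proof -
  have "(norm ((1 - l) *\<^sub>R a + l *\<^sub>R b))\<^sup>2
      = (1 - l)\<^sup>2 * (norm a)\<^sup>2 + l\<^sup>2 * (norm b)\<^sup>2 + 2 * ((1 - l) * l * (a \<bullet> b))"
    unfolding norm_add_sq by (simp add: power_mult_distrib)
  then show ?thesis unfolding norm_diff_sq by (simp add: algebra_simps power2_eq_square)
qed

lemma km_step_fejer:
  fixes N :: "'a::real_inner \<Rightarrow> 'a"
  assumes N: "nonexpansive N" and q: "N q = q" and l: "0 \<le> l" "l \<le> 1"
  shows "(norm (z + l *\<^sub>R (N z - z) - q))\<^sup>2 \<le> (norm (z - q))\<^sup>2 - l * (1 - l) * (norm (N z - z))\<^sup>2"
proof -
  have e: "z + l *\<^sub>R (N z - z) - q = (1 - l) *\<^sub>R (z - q) + l *\<^sub>R (N z - q)"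
    by (simp add: algebra_simps)
  have "norm (N z - q) \<le> norm (z - q)" using N q unfolding nonexpansive_def by metis
  then have "l * (norm (N z - q))\<^sup>2 \<le> l * (norm (z - q))\<^sup>2"
    using l by (intro mult_left_mono power_mono) auto
  moreover have "(norm (z + l *\<^sub>R (N z - z) - q))\<^sup>2
      = (1 - l) * (norm (z - q))\<^sup>2 + l * (norm (N z - q))\<^sup>2 - l * (1 - l) * (norm (N z - z))\<^sup>2"
    unfolding e norm_convex_combination_sq by (simp add: norm_minus_commute)
  ultimately show ?thesis by (simp add: algebra_simps)
qed

lemma km_step_residual_le:
  assumes N: "nonexpansive N" and l: "0 \<le> l" "l \<le> 1"
  shows "norm (N (z + l *\<^sub>R (N z - z)) - (z + l *\<^sub>R (N z - z))) \<le> norm (N z - z)"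
proof -
  define z' where "z' = z + l *\<^sub>R (N z - z)"
  have "N z' - z' = (N z' - N z) + (1 - l) *\<^sub>R (N z - z)" by (simp add: z'_def algebra_simps)
  then have "norm (N z' - z') \<le> norm (N z' - N z) + norm ((1 - l) *\<^sub>R (N z - z))"
    by (metis norm_triangle_ineq)
  also have "\<dots> \<le> norm (z' - z) + (1 - l) * norm (N z - z)"
    using N l by (simp add: nonexpansive_def)
  also have "norm (z' - z) = l * norm (N z - z)" using l by (simp add: z'_def)
  finally show ?thesis by (simp add: z'_def algebra_simps)
qed

text \<open>Summing the Fejer inequality bounds \<open>\<Sum> \<lambda>\<^sub>k (1 - \<lambda>\<^sub>k) |N z\<^sub>k - z\<^sub>k|\<^sup>2\<close>; since the
  residual is monotone and the weights have divergent sum, it must tend to zero.\<close>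
lemma km_residual_tendsto_zero:
  fixes N :: "'a::real_inner \<Rightarrow> 'a"
  assumes N: "nonexpansive N" and p: "N p = p" and l: "\<And>k. 0 \<le> l k \<and> l k \<le> 1"
    and div: "filterlim (\<lambda>n. \<Sum>k<n. l k * (1 - l k)) at_top sequentially"
    and it: "\<And>k. z (Suc k) = z k + l k *\<^sub>R (N (z k) - z k)"
  shows "(\<lambda>k. N (z k) - z k) \<longlonglongrightarrow> 0"
proof -
  define D where "D k = norm (N (z k) - z k)" for k
  define C where "C = (norm (z 0 - p))\<^sup>2"
  have dec: "decseq D"
    by (rule decseq_SucI) (use km_step_residual_le[OF N] l in \<open>simp add: D_def it\<close>)
  have sum: "(norm (z n - p))\<^sup>2 + (\<Sum>k<n. l k * (1 - l k) * (D k)\<^sup>2) \<le> C" for n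
  proof (induction n)
    case (Suc n)
    then show ?case using km_step_fejer[OF N p, of "l n" "z n"] l[of n] by (simp add: C_def D_def it)
  qed (simp add: C_def)
  have small: "\<exists>K. D K < r" if r: "r > 0" for r
  proof (rule ccontr)
    assume "\<not> (\<exists>K. D K < r)"
    then have Dr: "r\<^sup>2 \<le> (D k)\<^sup>2" for k using r by (simp add: not_less power_mono)
    obtain n where n: "C / r\<^sup>2 + 1 \<le> (\<Sum>k<n. l k * (1 - l k))"
      using div by (auto simp: filterlim_at_top eventually_sequentially)
    have "(\<Sum>k<n. l k * (1 - l k)) * r\<^sup>2 \<le> (\<Sum>k<n. l k * (1 - l k) * (D k)\<^sup>2)"
      unfolding sum_distrib_right using l Dr by (intro sum_mono mult_left_mono) auto
    also have "\<dots> \<le> C" using sum[of n] zero_le_power2[of "norm (z n - p)"] by linarith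
    finally have "(\<Sum>k<n. l k * (1 - l k)) * r\<^sup>2 \<le> C" .
    moreover have "(C / r\<^sup>2 + 1) * r\<^sup>2 \<le> (\<Sum>k<n. l k * (1 - l k)) * r\<^sup>2"
      using n by (rule mult_right_mono) simp
    moreover have "0 < r\<^sup>2" using r by simp
    then have "(C / r\<^sup>2 + 1) * r\<^sup>2 = C + r\<^sup>2" by (simp add: field_simps)
    ultimately show False using \<open>0 < r\<^sup>2\<close> by linarith
  qed
  have "D \<longlonglongrightarrow> 0"
  proof (rule LIMSEQ_I)
    fix r :: real assume "0 < r"
    then obtain K where "D K < r" using small by blast
    then have "norm (D n - 0) < r" if "K \<le> n" for n
      using decseqD[OF dec that] by (simp add: D_def)
    then show "\<exists>K. \<forall>n\<ge>K. norm (D n - 0) < r" by blast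
  qed
  then show ?thesis unfolding D_def[abs_def] by (simp only: tendsto_norm_zero_iff)
qed

lemma km_fejer_monotone:
  fixes N :: "'a::real_inner \<Rightarrow> 'a"
  assumes N: "nonexpansive N" and q: "N q = q" and l: "\<And>k. 0 \<le> l k \<and> l k \<le> 1"
    and it: "\<And>k. z (Suc k) = z k + l k *\<^sub>R (N (z k) - z k)"
  shows "decseq (\<lambda>k. norm (z k - q))"
proof (rule decseq_SucI)
  fix k
  have "0 \<le> l k * (1 - l k) * (norm (N (z k) - z k))\<^sup>2" using l[of k] by simp
  then have "(norm (z (Suc k) - q))\<^sup>2 \<le> (norm (z k - q))\<^sup>2"
    using km_step_fejer[OF N q, of "l k" "z k"] l[of k] unfolding it by linarith
  then show "norm (z (Suc k) - q) \<le> norm (z k - q)" by (rule power2_le_imp_le) simp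
qed

lemma decseq_norm_subseq_tendsto:
  assumes dec: "decseq (\<lambda>k. norm (z k - a))" and r: "strict_mono r" and lim: "(z \<circ> r) \<longlonglongrightarrow> a"
  shows "z \<longlonglongrightarrow> a"
proof -
  obtain L where L: "(\<lambda>k. norm (z k - a)) \<longlonglongrightarrow> L"
    using decseq_convergent[OF dec, of 0] by auto
  have "(\<lambda>n. norm (z (r n) - a)) \<longlonglongrightarrow> L" using LIMSEQ_subseq_LIMSEQ[OF L r] by (simp add: o_def)
  moreover have "(\<lambda>n. norm (z (r n) - a)) \<longlonglongrightarrow> 0"
    using lim by (simp add: o_def tendsto_norm_zero_iff LIM_zero_iff)
  ultimately have "L = 0" by (rule LIMSEQ_unique)
  then show ?thesis using L by (simp add: tendsto_norm_zero_iff LIM_zero_iff)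
qed

lemma nonexpansive_fixed_point_of_residual:
  assumes N: "nonexpansive N" and r: "strict_mono r" and lim: "(z \<circ> r) \<longlonglongrightarrow> a"
    and res: "(\<lambda>k. N (z k) - z k) \<longlonglongrightarrow> 0"
  shows "N a = a"
proof -
  have "(\<lambda>n. N ((z \<circ> r) n)) \<longlonglongrightarrow> N a" by (rule nonexpansive_tendsto[OF N lim])
  moreover have "(\<lambda>n. (N (z (r n)) - z (r n)) + (z \<circ> r) n) \<longlonglongrightarrow> 0 + a"
    using LIMSEQ_subseq_LIMSEQ[OF res r] lim by (intro tendsto_add) (simp_all add: o_def)
  ultimately show ?thesis by (simp add: o_def LIMSEQ_unique)
qed

lemma krasnoselskii_mann:
  fixes N :: "'a::euclidean_space \<Rightarrow> 'a"
  assumes N: "nonexpansive N" and p: "N p = p" and l: "\<And>k. 0 \<le> l k \<and> l k \<le> 1"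
    and div: "filterlim (\<lambda>n. \<Sum>k<n. l k * (1 - l k)) at_top sequentially"
    and it: "\<And>k. z (Suc k) = z k + l k *\<^sub>R (N (z k) - z k)"
  obtains zs where "N zs = zs" and "z \<longlonglongrightarrow> zs"
proof -
  have "norm (z k) \<le> norm (z 0 - p) + norm p" for k
    using decseqD[OF km_fejer_monotone[of N p l z, OF N p l it], of 0 k]
      norm_triangle_ineq[of "z k - p" p]
    by simp
  then have "bounded (range z)" unfolding bounded_iff by blast
  then obtain zs r where r: "strict_mono r" and lim: "(z \<circ> r) \<longlonglongrightarrow> zs"
    using bounded_imp_convergent_subsequence by blast
  have "(\<lambda>k. N (z k) - z k) \<longlonglongrightarrow> 0"
    by (rule km_residual_tendsto_zero[of N p l z, OF N p l div it])
  then have zs: "N zs = zs" by (rule nonexpansive_fixed_point_of_residual[OF N r lim])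
  have "decseq (\<lambda>k. norm (z k - zs))" by (rule km_fejer_monotone[of N zs l z, OF N zs l it])
  from zs decseq_norm_subseq_tendsto[OF this r lim] show ?thesis by (rule that)
qed

section \<open>Douglas--Rachford splitting\<close>

definition douglas_rachford ::
    "real \<Rightarrow> ('a::real_normed_vector \<Rightarrow> ereal) \<Rightarrow> ('a \<Rightarrow> ereal) \<Rightarrow> 'a \<Rightarrow> 'a" where
  "douglas_rachford \<gamma> f g = reflected_prox \<gamma> f \<circ> reflected_prox \<gamma> g"

lemma douglas_rachford_fixed_pointI:
  fixes f g :: "'a::real_inner \<Rightarrow> ereal"
  assumes pf: "proper_fun f" and pg: "proper_fun g" and g: "\<gamma> > 0"
    and ug: "u \<in> subdiff g x" and uf: "- u \<in> subdiff f x"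
  shows "douglas_rachford \<gamma> f g (x + \<gamma> *\<^sub>R u) = x + \<gamma> *\<^sub>R u"
proof -
  have "prox \<gamma> g (x + \<gamma> *\<^sub>R u) = x" by (rule prox_eqI[OF pg g]) (use ug g in simp)
  moreover have "prox \<gamma> f (x - \<gamma> *\<^sub>R u) = x" by (rule prox_eqI[OF pf g]) (use uf g in simp)
  ultimately show ?thesis by (simp add: douglas_rachford_def reflected_prox_def scaleR_2)
qed

lemma douglas_rachford_fixed_point_prox:
  assumes "douglas_rachford \<gamma> f g z = z"
  shows "prox \<gamma> f (2 *\<^sub>R prox \<gamma> g z - z) = prox \<gamma> g z"
proof -
  have "2 *\<^sub>R prox \<gamma> f (2 *\<^sub>R prox \<gamma> g z - z) - (2 *\<^sub>R prox \<gamma> g z - z) = z"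
    using assms by (simp add: douglas_rachford_def reflected_prox_def)
  then show ?thesis by (simp add: algebra_simps)
qed

lemma douglas_rachford_fixed_point_Argmin:
  fixes f g :: "'a::euclidean_space \<Rightarrow> ereal"
  assumes f: "proper_lsc_convex f" and g: "proper_lsc_convex g" and gamma: "\<gamma> > 0"
    and fixed: "douglas_rachford \<gamma> f g z = z"
  shows "prox \<gamma> g z \<in> Argmin (\<lambda>y. f y + g y)"
proof -
  define x u where "x = prox \<gamma> g z" and "u = (1/\<gamma>) *\<^sub>R (z - x)"
  have "u \<in> subdiff g x" using prox_subdiff[OF g gamma, of z] by (simp add: u_def x_def)
  moreover have "(1/\<gamma>) *\<^sub>R ((2 *\<^sub>R x - z) - x) = - u" by (simp add: u_def algebra_simps scaleR_2)
  then have "- u \<in> subdiff f x"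
    using prox_subdiff[OF f gamma, of "2 *\<^sub>R x - z"] douglas_rachford_fixed_point_prox[OF fixed]
    by (simp add: x_def)
  ultimately show ?thesis
    unfolding x_def using f g by (intro Argmin_add_of_subdiff) (auto simp: proper_lsc_convex_def)
qed

text \<open>With \<open>N = R\<^sub>\<gamma>\<^sub>f \<circ> R\<^sub>\<gamma>\<^sub>g\<close> the iteration reads
  \<open>z\<^sub>k\<^sub>+\<^sub>1 = z\<^sub>k + (\<tau>\<^sub>k/2) (N z\<^sub>k - z\<^sub>k)\<close> and \<open>v\<^sub>k\<^sub>+\<^sub>1 = x\<^sub>k + (N z\<^sub>k - z\<^sub>k)/2\<close>.\<close>
lemma douglas_rachford_convergence:
  fixes f g :: "'a::euclidean_space \<Rightarrow> ereal"
  assumes f: "proper_lsc_convex f" and g: "proper_lsc_convex g" and gamma: "\<gamma> > 0"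
    and tau: "\<And>k. 0 < \<tau> k \<and> \<tau> k < 2"
    and tau_div: "filterlim (\<lambda>n. \<Sum>k<n. \<tau> k * (2 - \<tau> k)) at_top sequentially"
    and x_def: "\<And>k. x k = prox \<gamma> g (z k)"
    and v_def: "\<And>k. v (Suc k) = prox \<gamma> f (2 *\<^sub>R x k - z k)"
    and z_def: "\<And>k. z (Suc k) = z k + \<tau> k *\<^sub>R (v (Suc k) - x k)"
    and p: "douglas_rachford \<gamma> f g p = p"
  obtains zs where "douglas_rachford \<gamma> f g zs = zs" and "z \<longlonglongrightarrow> zs"
    and "x \<longlonglongrightarrow> prox \<gamma> g zs" and "v \<longlonglongrightarrow> prox \<gamma> g zs"
proof -
  let ?N = "douglas_rachford \<gamma> f g"
  have N: "nonexpansive ?N" unfolding douglas_rachford_def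
    by (intro nonexpansive_comp reflected_prox_nonexpansive f g gamma)
  have res: "?N (z k) - z k = 2 *\<^sub>R (v (Suc k) - x k)" for k
    by (simp add: douglas_rachford_def reflected_prox_def v_def x_def algebra_simps)
  have "filterlim (\<lambda>n. (1/4) * (\<Sum>k<n. \<tau> k * (2 - \<tau> k))) at_top sequentially"
    by (rule filterlim_tendsto_pos_mult_at_top[OF tendsto_const _ tau_div]) simp
  then have div: "filterlim (\<lambda>n. \<Sum>k<n. \<tau> k / 2 * (1 - \<tau> k / 2)) at_top sequentially"
    by (simp add: sum_distrib_left algebra_simps)
  have l: "0 \<le> \<tau> k / 2 \<and> \<tau> k / 2 \<le> 1" for k using tau[of k] by simp
  have it: "z (Suc k) = z k + (\<tau> k / 2) *\<^sub>R (?N (z k) - z k)" for k by (simp add: z_def res)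
  obtain zs where zs: "?N zs = zs" and zlim: "z \<longlonglongrightarrow> zs"
    using krasnoselskii_mann[of ?N p "\<lambda>k. \<tau> k / 2" z, OF N p l div it] by blast
  have xlim: "x \<longlonglongrightarrow> prox \<gamma> g zs"
    unfolding x_def[abs_def] by (rule nonexpansive_tendsto[OF prox_nonexpansive[OF g gamma] zlim])
  have "(\<lambda>k. x k + (1/2) *\<^sub>R (?N (z k) - z k)) \<longlonglongrightarrow> prox \<gamma> g zs + (1/2) *\<^sub>R (?N zs - zs)"
    by (intro tendsto_intros xlim zlim nonexpansive_tendsto[OF N])
  then have "(\<lambda>k. v (Suc k)) \<longlonglongrightarrow> prox \<gamma> g zs" by (simp add: res zs)
  then have "v \<longlonglongrightarrow> prox \<gamma> g zs" by (rule LIMSEQ_imp_Suc)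
  with zs zlim xlim show ?thesis by (rule that)
qed

section \<open>Identification of strata\<close>

lemma subdiff_conjugateI:
  fixes R :: "'a::real_inner \<Rightarrow> ereal"
  assumes pR: "proper_fun R" and q: "q \<in> subdiff R p"
  shows "p \<in> subdiff (conjugate R) q"
proof -
  have pE: "p \<in> edom R" and sg: "\<And>y. y \<in> edom R \<Longrightarrow> rval R p + q \<bullet> (y - p) \<le> rval R y"
    using q subdiff_iff_rval[OF pR] by auto
  obtain r where Rp: "R p = ereal r" using proper_fun_rval[OF pR pE] by blast
  have supp: "ereal (w \<bullet> p - r) \<le> conjugate R w" for w
  proof -
    have "ereal (w \<bullet> p) - R p \<le> conjugate R w" unfolding conjugate_def by (rule SUP_upper) simp
    then show ?thesis by (simp add: Rp)
  qed
  have "ereal (q \<bullet> y) - R y \<le> ereal (q \<bullet> p - r)" for y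
  proof (cases "y \<in> edom R")
    case True
    have "q \<bullet> y - rval R y \<le> q \<bullet> p - r" using sg[OF True] Rp by (simp add: inner_diff_right)
    then show ?thesis by (subst proper_fun_rval[OF pR True]) simp
  qed (simp add: notin_edom_eq_infinity)
  then have "conjugate R q \<le> ereal (q \<bullet> p - r)"
    unfolding conjugate_def by (rule SUP_least)
  then have cq: "conjugate R q = ereal (q \<bullet> p - r)" using supp[of q] by (rule antisym)
  show ?thesis unfolding subdiff_def
  proof (intro CollectI conjI allI)
    show "conjugate R q < \<infinity>" by (simp add: cq)
    fix w
    have "conjugate R q + ereal (p \<bullet> (w - q)) = ereal (w \<bullet> p - r)"
      by (simp add: cq inner_diff_right inner_commute)
    then show "conjugate R q + ereal (p \<bullet> (w - q)) \<le> conjugate R w" using supp[of w] by simp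
  qed
qed

lemma convex_subdiff: "convex (subdiff R x)"
proof (cases "R x")
  case (real r)
  have "convex {u. ereal r + ereal (u \<bullet> (y - x)) \<le> R y}" for y
  proof (cases "R y")
    case (real s)
    have "{u. ereal r + ereal (u \<bullet> (y - x)) \<le> R y} = {u. (y - x) \<bullet> u \<le> s - r}"
      using real by (auto simp: inner_commute)
    then show ?thesis by (simp add: convex_halfspace_le)
  qed simp_all
  moreover have "subdiff R x = (\<Inter>y. {u. ereal r + ereal (u \<bullet> (y - x)) \<le> R y})"
    using real by (auto simp: subdiff_def)
  ultimately show ?thesis by (simp add: convex_INT)
qed (simp_all add: subdiff_def)

lemma stratum_mem:
  assumes S: "stratification \<S> D" and x: "x \<in> D"
  shows "stratum \<S> x \<in> \<S>" and "x \<in> stratum \<S> x"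
proof -
  have U: "\<Union>\<S> = D" and disj: "\<forall>M\<in>\<S>. \<forall>M'\<in>\<S>. M \<noteq> M' \<longrightarrow> M \<inter> M' = {}"
    using S unfolding stratification_def by simp_all
  obtain M where M: "M \<in> \<S>" "x \<in> M" using U x by blast
  have "stratum \<S> x = M" unfolding stratum_def
  proof (rule the_equality)
    show "M \<in> \<S> \<and> x \<in> M" using M by simp
    show "M' = M" if "M' \<in> \<S> \<and> x \<in> M'" for M' using disj M that by blast
  qed
  then show "stratum \<S> x \<in> \<S>" "x \<in> stratum \<S> x" using M by simp_all
qed

lemma stratification_frontier:
  "stratification \<S> D \<Longrightarrow> M \<in> \<S> \<Longrightarrow> M' \<in> \<S> \<Longrightarrow> M \<inter> closure M' \<noteq> {} \<Longrightarrow> strat_le M M'"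
  unfolding stratification_def strat_le_def by blast

text \<open>The strata \<open>M\<close> with \<open>\<not> M\<^bsub>ps\<^esub> \<le> M\<close> are finitely many and, by the frontier condition,
  their closures avoid \<open>ps\<close>; so \<open>p k\<close> eventually lies outside all of them.\<close>
lemma eventually_strat_le_stratum:
  fixes p :: "nat \<Rightarrow> 'a::topological_space"
  assumes S: "stratification \<S> D" and lim: "p \<longlonglongrightarrow> ps" and ps: "ps \<in> D"
    and ev: "\<forall>\<^sub>F k in sequentially. p k \<in> D"
  shows "\<forall>\<^sub>F k in sequentially. strat_le (stratum \<S> ps) (stratum \<S> (p k))"
proof -
  define B where "B = {M \<in> \<S>. \<not> strat_le (stratum \<S> ps) M}"
  have fin: "finite B" using S unfolding B_def stratification_def by simp
  have "\<forall>M\<in>B. \<forall>\<^sub>F k in sequentially. p k \<in> - closure M"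
  proof
    fix M assume M: "M \<in> B"
    have "stratum \<S> ps \<inter> closure M = {}"
      using stratification_frontier[OF S stratum_mem(1)[OF S ps]] M by (auto simp: B_def)
    then have "ps \<in> - closure M" using stratum_mem(2)[OF S ps] by blast
    then show "\<forall>\<^sub>F k in sequentially. p k \<in> - closure M"
      by (intro topological_tendstoD[OF lim] open_Compl closed_closure)
  qed
  then have "\<forall>\<^sub>F k in sequentially. \<forall>M\<in>B. p k \<in> - closure M"
    by (rule eventually_ball_finite[OF fin])
  then show ?thesis using ev
  proof eventually_elim
    case (elim k)
    then have "stratum \<S> (p k) \<notin> B"
      using stratum_mem(2)[OF S elim(2)] closure_subset by blast
    then show ?case using stratum_mem(1)[OF S elim(2)] unfolding B_def by simp
  qed
qed

text \<open>The identification step: \<open>p \<in> \<partial>R\<^sup>*(q) \<subseteq> cl ri \<partial>R\<^sup>*(q) \<subseteq> cl J\<^bsub>R*\<^esub>(M\<^bsub>q\<^esub>)\<close>, so the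
  frontier condition gives \<open>M\<^bsub>p\<^esub> \<le> J\<^bsub>R*\<^esub>(M\<^bsub>q\<^esub>)\<close>, and the order reversal of \<open>J\<close> turns
  \<open>M\<^bsub>qs\<^esub> \<le> M\<^bsub>q\<^esub>\<close> into \<open>J\<^bsub>R*\<^esub>(M\<^bsub>q\<^esub>) \<le> J\<^bsub>R*\<^esub>(M\<^bsub>qs\<^esub>)\<close>.\<close>
lemma mirror_stratifiable_strat_le_Jmap:
  fixes R :: "'a::euclidean_space \<Rightarrow> ereal"
  assumes ms: "mirror_stratifiable R \<S> \<S>s" and pR: "proper_fun R"
    and qs: "qs \<in> dom_subdiff (conjugate R)" and pq: "q \<in> subdiff R p"
    and le: "strat_le (stratum \<S>s qs) (stratum \<S>s q)"
  shows "strat_le (stratum \<S> p) (Jmap (conjugate R) (stratum \<S>s qs))"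
proof -
  have St: "stratification \<S> (dom_subdiff R)"
    and Sts: "stratification \<S>s (dom_subdiff (conjugate R))"
    and J: "\<forall>Ms\<in>\<S>s. Jmap (conjugate R) Ms \<in> \<S>"
    and bij: "\<forall>M\<in>\<S>. \<forall>Ms\<in>\<S>s. Ms = Jmap R M \<longleftrightarrow> Jmap (conjugate R) Ms = M"
    and ord: "\<forall>M\<in>\<S>. \<forall>M'\<in>\<S>. strat_le M M' \<longleftrightarrow> strat_le (Jmap R M') (Jmap R M)"
    using ms unfolding mirror_stratifiable_def by simp_all
  have pC: "p \<in> subdiff (conjugate R) q" by (rule subdiff_conjugateI[OF pR pq])
  then have qD: "q \<in> dom_subdiff (conjugate R)" and pD: "p \<in> dom_subdiff R"
    using pq by (auto simp: dom_subdiff_def)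
  define Mq Ms where "Mq = stratum \<S>s q" and "Ms = stratum \<S>s qs"
  have Mq: "Mq \<in> \<S>s" "q \<in> Mq" and Ms: "Ms \<in> \<S>s"
    using stratum_mem[OF Sts qD] stratum_mem[OF Sts qs] by (auto simp: Mq_def Ms_def)
  define M1 M2 where "M1 = Jmap (conjugate R) Mq" and "M2 = Jmap (conjugate R) Ms"
  have M1: "M1 \<in> \<S>" and M2: "M2 \<in> \<S>" using J Mq(1) Ms by (simp_all add: M1_def M2_def)
  have "Mq = Jmap R M1" using bij M1 Mq(1) by (simp add: M1_def)
  moreover have "Ms = Jmap R M2" using bij M2 Ms by (simp add: M2_def)
  ultimately have "strat_le M1 M2" using ord M1 M2 le by (simp add: Mq_def Ms_def)
  then have cl: "closure M1 \<subseteq> closure M2" unfolding strat_le_def by (simp add: closure_minimal)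
  have "p \<in> closure (rel_interior (subdiff (conjugate R) q))"
    using pC closure_subset convex_closure_rel_interior[OF convex_subdiff] by blast
  moreover have "rel_interior (subdiff (conjugate R) q) \<subseteq> M1"
    unfolding M1_def Jmap_def using Mq(2) by blast
  ultimately have "p \<in> closure M1" using closure_mono by blast
  then have "strat_le (stratum \<S> p) M1"
    using stratification_frontier[OF St stratum_mem(1)[OF St pD] M1] stratum_mem(2)[OF St pD]
    by blast
  then show ?thesis using cl unfolding strat_le_def M2_def Ms_def by blast
qed

lemma mirror_stratifiable_eventually_strat_le:
  fixes R :: "'a::euclidean_space \<Rightarrow> ereal"
  assumes ms: "mirror_stratifiable R \<S> \<S>s" and pR: "proper_fun R"
    and pl: "p \<longlonglongrightarrow> ps" and ql: "q \<longlonglongrightarrow> qs" and qs: "qs \<in> subdiff R ps"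
    and sub: "\<And>k. q k \<in> subdiff R (p k)"
  shows "\<forall>\<^sub>F k in sequentially. strat_le (stratum \<S> ps) (stratum \<S> (p k))
            \<and> strat_le (stratum \<S> (p k)) (Jmap (conjugate R) (stratum \<S>s qs))"
proof -
  have St: "stratification \<S> (dom_subdiff R)"
    and Sts: "stratification \<S>s (dom_subdiff (conjugate R))"
    using ms unfolding mirror_stratifiable_def by blast+
  have psD: "ps \<in> dom_subdiff R" and pD: "\<And>k. p k \<in> dom_subdiff R"
    using qs sub by (auto simp: dom_subdiff_def)
  have qsD: "qs \<in> dom_subdiff (conjugate R)" and qD: "\<And>k. q k \<in> dom_subdiff (conjugate R)"
    using subdiff_conjugateI[OF pR qs] subdiff_conjugateI[OF pR sub] by (auto simp: dom_subdiff_def)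
  have "\<forall>\<^sub>F k in sequentially. strat_le (stratum \<S> ps) (stratum \<S> (p k))"
    by (rule eventually_strat_le_stratum[OF St pl psD always_eventually]) (simp add: pD)
  moreover have "\<forall>\<^sub>F k in sequentially. strat_le (stratum \<S>s qs) (stratum \<S>s (q k))"
    by (rule eventually_strat_le_stratum[OF Sts ql qsD always_eventually]) (simp add: qD)
  ultimately show ?thesis
    by eventually_elim (use mirror_stratifiable_strat_le_Jmap[OF ms pR qsD sub] in blast)
qed

lemma prox_eventually_strat_le:
  fixes h :: "'a::euclidean_space \<Rightarrow> ereal"
  assumes h: "proper_lsc_convex h" and gamma: "\<gamma> > 0" and ms: "mirror_stratifiable h \<S> \<S>s"
    and wlim: "w \<longlonglongrightarrow> ws"
  shows "\<forall>\<^sub>F k in sequentially.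
      strat_le (stratum \<S> (prox \<gamma> h ws)) (stratum \<S> (prox \<gamma> h (w k)))
    \<and> strat_le (stratum \<S> (prox \<gamma> h (w k)))
        (Jmap (conjugate h) (stratum \<S>s ((1/\<gamma>) *\<^sub>R (ws - prox \<gamma> h ws))))"
proof (rule mirror_stratifiable_eventually_strat_le[OF ms _ _ _ prox_subdiff[OF h gamma]])
  show "proper_fun h" using h by (simp add: proper_lsc_convex_def)
  show plim: "(\<lambda>k. prox \<gamma> h (w k)) \<longlonglongrightarrow> prox \<gamma> h ws"
    by (rule nonexpansive_tendsto[OF prox_nonexpansive[OF h gamma] wlim])
  show "(\<lambda>k. (1/\<gamma>) *\<^sub>R (w k - prox \<gamma> h (w k))) \<longlonglongrightarrow> (1/\<gamma>) *\<^sub>R (ws - prox \<gamma> h ws)"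
    by (intro tendsto_intros wlim plim)
qed (rule prox_subdiff[OF h gamma])

theorem theorem5p2:
  fixes f g :: "'a::euclidean_space \<Rightarrow> ereal"
    and \<gamma> :: real and \<tau> :: "nat \<Rightarrow> real"
    and z x v :: "nat \<Rightarrow> 'a"
  assumes f: "proper_lsc_convex f" and g: "proper_lsc_convex g"
    and ri: "rel_interior (edom f) \<inter> rel_interior (edom g) \<noteq> {}"
    and argmin: "Argmin (\<lambda>y. f y + g y) \<noteq> {}"
    and gamma: "\<gamma> > 0"
    and tau: "\<And>k. 0 < \<tau> k \<and> \<tau> k < 2"
    and tau_div: "filterlim (\<lambda>n. \<Sum>k<n. \<tau> k * (2 - \<tau> k)) at_top sequentially"
    and x_def: "\<And>k. x k = prox \<gamma> g (z k)"
    and v_def: "\<And>k. v (Suc k) = prox \<gamma> f (2 *\<^sub>R x k - z k)"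
    and z_def: "\<And>k. z (Suc k) = z k + \<tau> k *\<^sub>R (v (Suc k) - x k)"
  shows "\<exists>zs xs. z \<longlonglongrightarrow> zs \<and> xs = prox \<gamma> g zs \<and> xs \<in> Argmin (\<lambda>y. f y + g y)
     \<and> x \<longlonglongrightarrow> xs \<and> v \<longlonglongrightarrow> xs
     \<and> (let us = (1 / \<gamma>) *\<^sub>R (zs - xs) in
          (\<forall>Sg Sgs. mirror_stratifiable g Sg Sgs \<longrightarrow>
             (\<forall>\<^sub>F k in sequentially.
                strat_le (stratum Sg xs) (stratum Sg (x k))
              \<and> strat_le (stratum Sg (x k)) (Jmap (conjugate g) (stratum Sgs us))))
        \<and> (\<forall>Sf Sfs. mirror_stratifiable f Sf Sfs \<longrightarrow>
             (\<forall>\<^sub>F k in sequentially.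
                strat_le (stratum Sf xs) (stratum Sf (v k))
              \<and> strat_le (stratum Sf (v k)) (Jmap (conjugate f) (stratum Sfs (- us))))))"
proof -
  have pf: "proper_fun f" and cf: "convex_fun f" and pg: "proper_fun g" and cg: "convex_fun g"
    using f g by (auto simp: proper_lsc_convex_def)
  obtain c xm where c: "c \<in> rel_interior (edom f)" "c \<in> rel_interior (edom g)"
    and xm: "xm \<in> Argmin (\<lambda>y. f y + g y)" using ri argmin by blast
  obtain u where "u \<in> subdiff g xm" "- u \<in> subdiff f xm"
    using Argmin_add_subdiff[OF pf cf pg cg c xm] by blast
  from douglas_rachford_fixed_pointI[OF pf pg gamma this]
  obtain zs where zs: "douglas_rachford \<gamma> f g zs = zs" and zlim: "z \<longlonglongrightarrow> zs"
    and xlim: "x \<longlonglongrightarrow> prox \<gamma> g zs" and vlim: "v \<longlonglongrightarrow> prox \<gamma> g zs"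
    by (rule douglas_rachford_convergence[OF f g gamma tau tau_div x_def v_def z_def])
  define xs us where "xs = prox \<gamma> g zs" and "us = (1 / \<gamma>) *\<^sub>R (zs - xs)"
  have pfx: "prox \<gamma> f (2 *\<^sub>R xs - zs) = xs"
    unfolding xs_def by (rule douglas_rachford_fixed_point_prox[OF zs])
  have us: "(1/\<gamma>) *\<^sub>R ((2 *\<^sub>R xs - zs) - xs) = - us" by (simp add: us_def algebra_simps scaleR_2)
  have "xs \<in> Argmin (\<lambda>y. f y + g y)"
    unfolding xs_def by (rule douglas_rachford_fixed_point_Argmin[OF f g gamma zs])
  moreover have "\<forall>\<^sub>F k in sequentially. strat_le (stratum Sg xs) (stratum Sg (x k))
      \<and> strat_le (stratum Sg (x k)) (Jmap (conjugate g) (stratum Sgs us))"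
    if "mirror_stratifiable g Sg Sgs" for Sg Sgs
    using prox_eventually_strat_le[OF g gamma that zlim] by (simp add: x_def xs_def us_def)
  moreover have "\<forall>\<^sub>F k in sequentially. strat_le (stratum Sf xs) (stratum Sf (v k))
      \<and> strat_le (stratum Sf (v k)) (Jmap (conjugate f) (stratum Sfs (- us)))"
    if "mirror_stratifiable f Sf Sfs" for Sf Sfs
  proof -
    have "(\<lambda>k. 2 *\<^sub>R x k - z k) \<longlonglongrightarrow> 2 *\<^sub>R xs - zs"
      using xlim by (intro tendsto_intros zlim) (simp add: xs_def)
    from prox_eventually_strat_le[OF f gamma that this]
    have "\<forall>\<^sub>F k in sequentially. strat_le (stratum Sf xs) (stratum Sf (v (Suc k)))
        \<and> strat_le (stratum Sf (v (Suc k))) (Jmap (conjugate f) (stratum Sfs (- us)))"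
      by (simp add: v_def[symmetric] pfx us)
    then show ?thesis by (rule eventually_sequentially_Suc[THEN iffD1])
  qed
  ultimately show ?thesis using zlim xlim vlim unfolding xs_def us_def Let_def by blast
qed

end
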